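(* (i) For any $\Gamma\cup\{A\}\subseteq\mathcal{L}_\infty$, if $\Gamma\vdash_{\mathbf{GL}_h}A$ then $\Gamma^f\vdash_{\mathbf{GL}}A^f$. (ii) For any set $\Gamma\cup\{A\}$ of formulas of the ordinary unimodal language $\mathcal{L}_\Box$ and any witnesses $v$ for $\Gamma$ and $w$ for $A$, if $\Gamma\vdash_{\mathbf{GL}}A$ then $\Gamma(v)\vdash_{\mathbf{GL}_h}A(w)$.
   Context: The language $\mathcal{L}_\infty$ consists of modal formulas built from propositional atoms, $\bot,\top$, the connectives $\neg,\wedge,\vee,\rightarrow$ and unary modalities $\Box_n$ ($n\in\mathbb{N}$), with the restriction that $\Box_n A$ is a formula only if $n$ is strictly greater than the index of every box occurring in $A$. Axiom instances are only those that are $\mathcal{L}_\infty$-formulas. Axiom schemes (for all $n\ge0$): $\mathbf{H}$: $\Box_n A\rightarrow\Box_{n+1}A$; $\mathbf{K}_h$: $\Box_n(A\rightarrow B)\rightarrow(\Box_nA\rightarrow\Box_nB)$; $\mathbf{4}_h$: $\Box_nA\rightarrow\Box_{n+1}\Box_nA$; $\mathbf{L}_h$: $\Box_{n+1}(\Box_nA\rightarrow A)\rightarrow\Box_nA$. $\mathbf{GL}_h$ is the least set of $\mathcal{L}_\infty$-formulas containing all classical propositional tautologies and all instances of $\mathbf{H},\mathbf{K}_h,\mathbf{4}_h,\mathbf{L}_h$, closed under modus ponens and the rule: from $A$ infer $\Box_nA$ for any $n$ greater than all box indices in $A$. $\mathbf{GL}$ is the usual Gödel–Löb provability logic in $\mathcal{L}_\Box$,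 the usual modal language with one modality $\Box$. For a logic $L$ and a set $\Gamma$, $\Gamma\vdash_LA$ means $\bigwedge\Delta\rightarrow A\in L$ for some finite $\Delta\subseteq\Gamma$. The forgetful translation $f:\mathcal{L}_\infty\to\mathcal{L}_\Box$ fixes atoms, commutes with the connectives and sends every $\Box_n$ to $\Box$; $\Gamma^f=\{B^f:B\in\Gamma\}$. A witness for $A\in\mathcal{L}_\Box$ is an assignment of a natural number to each occurrence of $\Box$ in $A$ such that the number assigned to each occurrence is strictly greater than the numbers assigned to all box occurrences inside its scope. For a witness $w$ of $A$, $A(w)\in\mathcal{L}_\infty$ is obtained by replacing each occurrence of $\Box$ by $\Box_n$ with $n$ its assigned number. A witness $v$ for a set $\Gamma$ is a family assigning a witness $v_B$ to each $B\in\Gamma$, and $\Gamma(v)=\{B(v_B):B\in\Gamma\}$. *)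

theory Defs
  imports Main
begin

datatype 'a hfm = HAtom 'a | HBot | HTop | HNeg "'a hfm" | HAnd "'a hfm" "'a hfm"
  | HOr "'a hfm" "'a hfm" | HImp "'a hfm" "'a hfm" | HBox nat "'a hfm"

fun boxes :: "'a hfm \<Rightarrow> nat set" where
  "boxes (HAtom p) = {}"
| "boxes HBot = {}"
| "boxes HTop = {}"
| "boxes (HNeg A) = boxes A"
| "boxes (HAnd A B) = boxes A \<union> boxes B"
| "boxes (HOr A B) = boxes A \<union> boxes B"
| "boxes (HImp A B) = boxes A \<union> boxes B"
| "boxes (HBox n A) = insert n (boxes A)"

fun in_Linf :: "'a hfm \<Rightarrow> bool" where
  "in_Linf (HAtom p) = True"
| "in_Linf HBot = True"
| "in_Linf HTop = True"
| "in_Linf (HNeg A) = in_Linf A"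
| "in_Linf (HAnd A B) = (in_Linf A \<and> in_Linf B)"
| "in_Linf (HOr A B) = (in_Linf A \<and> in_Linf B)"
| "in_Linf (HImp A B) = (in_Linf A \<and> in_Linf B)"
| "in_Linf (HBox n A) = (in_Linf A \<and> (\<forall>m\<in>boxes A. m < n))"

fun heval :: "('a \<Rightarrow> bool) \<Rightarrow> (nat \<Rightarrow> 'a hfm \<Rightarrow> bool) \<Rightarrow> 'a hfm \<Rightarrow> bool" where
  "heval va vb (HAtom p) = va p"
| "heval va vb HBot = False"
| "heval va vb HTop = True"
| "heval va vb (HNeg A) = (\<not> heval va vb A)"
| "heval va vb (HAnd A B) = (heval va vb A \<and> heval va vb B)"
| "heval va vb (HOr A B) = (heval va vb A \<or> heval va vb B)"
| "heval va vb (HImp A B) = (heval va vb A \<longrightarrow> heval va vb B)"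
| "heval va vb (HBox n A) = vb n A"

definition htaut :: "'a hfm \<Rightarrow> bool" where
  "htaut A \<longleftrightarrow> (\<forall>va vb. heval va vb A)"

inductive_set GLh :: "'a hfm set" where
  taut: "\<lbrakk>htaut A; in_Linf A\<rbrakk> \<Longrightarrow> A \<in> GLh"
| H: "in_Linf (HImp (HBox n A) (HBox (Suc n) A)) \<Longrightarrow> HImp (HBox n A) (HBox (Suc n) A) \<in> GLh"
| K: "in_Linf (HImp (HBox n (HImp A B)) (HImp (HBox n A) (HBox n B))) \<Longrightarrow>
      HImp (HBox n (HImp A B)) (HImp (HBox n A) (HBox n B)) \<in> GLh"
| Four: "in_Linf (HImp (HBox n A) (HBox (Suc n) (HBox n A))) \<Longrightarrow>
      HImp (HBox n A) (HBox (Suc n) (HBox n A)) \<in> GLh"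
| L: "in_Linf (HImp (HBox (Suc n) (HImp (HBox n A) A)) (HBox n A)) \<Longrightarrow>
      HImp (HBox (Suc n) (HImp (HBox n A) A)) (HBox n A) \<in> GLh"
| MP: "\<lbrakk>A \<in> GLh; HImp A B \<in> GLh\<rbrakk> \<Longrightarrow> B \<in> GLh"
| Nec: "\<lbrakk>A \<in> GLh; \<forall>m\<in>boxes A. m < n\<rbrakk> \<Longrightarrow> HBox n A \<in> GLh"

fun hconj :: "'a hfm list \<Rightarrow> 'a hfm" where
  "hconj [] = HTop"
| "hconj (D # Ds) = HAnd D (hconj Ds)"

definition hderiv :: "'a hfm set \<Rightarrow> 'a hfm \<Rightarrow> bool" where
  "hderiv \<Gamma> A \<longleftrightarrow> (\<exists>Ds. set Ds \<subseteq> \<Gamma> \<and> HImp (hconj Ds) A \<in> GLh)"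

datatype 'a mfm = MAtom 'a | MBot | MTop | MNeg "'a mfm" | MAnd "'a mfm" "'a mfm"
  | MOr "'a mfm" "'a mfm" | MImp "'a mfm" "'a mfm" | MBox "'a mfm"

fun meval :: "('a \<Rightarrow> bool) \<Rightarrow> ('a mfm \<Rightarrow> bool) \<Rightarrow> 'a mfm \<Rightarrow> bool" where
  "meval va vb (MAtom p) = va p"
| "meval va vb MBot = False"
| "meval va vb MTop = True"
| "meval va vb (MNeg A) = (\<not> meval va vb A)"
| "meval va vb (MAnd A B) = (meval va vb A \<and> meval va vb B)"
| "meval va vb (MOr A B) = (meval va vb A \<or> meval va vb B)"
| "meval va vb (MImp A B) = (meval va vb A \<longrightarrow> meval va vb B)"
| "meval va vb (MBox A) = vb A"

definition mtaut :: "'a mfm \<Rightarrow> bool" where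
  "mtaut A \<longleftrightarrow> (\<forall>va vb. meval va vb A)"

inductive_set GL :: "'a mfm set" where
  taut: "mtaut A \<Longrightarrow> A \<in> GL"
| K: "MImp (MBox (MImp A B)) (MImp (MBox A) (MBox B)) \<in> GL"
| L: "MImp (MBox (MImp (MBox A) A)) (MBox A) \<in> GL"
| MP: "\<lbrakk>A \<in> GL; MImp A B \<in> GL\<rbrakk> \<Longrightarrow> B \<in> GL"
| Nec: "A \<in> GL \<Longrightarrow> MBox A \<in> GL"

fun mconj :: "'a mfm list \<Rightarrow> 'a mfm" where
  "mconj [] = MTop"
| "mconj (D # Ds) = MAnd D (mconj Ds)"

definition mderiv :: "'a mfm set \<Rightarrow> 'a mfm \<Rightarrow> bool" where
  "mderiv \<Gamma> A \<longleftrightarrow> (\<exists>Ds. set Ds \<subseteq> \<Gamma> \<and> MImp (mconj Ds) A \<in> GL)"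

fun forget :: "'a hfm \<Rightarrow> 'a mfm" where
  "forget (HAtom p) = MAtom p"
| "forget HBot = MBot"
| "forget HTop = MTop"
| "forget (HNeg A) = MNeg (forget A)"
| "forget (HAnd A B) = MAnd (forget A) (forget B)"
| "forget (HOr A B) = MOr (forget A) (forget B)"
| "forget (HImp A B) = MImp (forget A) (forget B)"
| "forget (HBox n A) = MBox (forget A)"

text \<open>An assignment of numbers to occurrences: positions in the syntax tree are
  paths (lists of child indices from the root); the box occurrence at path p gets
  the number w p. inst w A is A(w).\<close>
type_synonym assignment = "nat list \<Rightarrow> nat"

fun inst :: "assignment \<Rightarrow> 'a mfm \<Rightarrow> 'a hfm" where
  "inst w (MAtom p) = HAtom p"
| "inst w MBot = HBot"
| "inst w MTop = HTop"
| "inst w (MNeg A) = HNeg (inst (\<lambda>p. w (0 # p)) A)"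
| "inst w (MAnd A B) = HAnd (inst (\<lambda>p. w (0 # p)) A) (inst (\<lambda>p. w (1 # p)) B)"
| "inst w (MOr A B) = HOr (inst (\<lambda>p. w (0 # p)) A) (inst (\<lambda>p. w (1 # p)) B)"
| "inst w (MImp A B) = HImp (inst (\<lambda>p. w (0 # p)) A) (inst (\<lambda>p. w (1 # p)) B)"
| "inst w (MBox A) = HBox (w []) (inst (\<lambda>p. w (0 # p)) A)"

text \<open>w is a witness for A iff the number of each box occurrence exceeds the numbers of
  all box occurrences in its scope, i.e. iff A(w) is an L_inf formula.\<close>
definition is_witness :: "assignment \<Rightarrow> 'a mfm \<Rightarrow> bool" where
  "is_witness w A \<longleftrightarrow> in_Linf (inst w A)"

end

theory Submission
  imports Defs
begin

text \<open>Forgetting indices sends every axiom of \<open>GL\<^sub>h\<close> to a theorem of \<open>GL\<close> (for \<open>4\<close> one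
  uses that it is derivable in \<open>GL\<close>), so (i) is a routine induction. For (ii), a theorem \<open>A\<close>
  of \<open>GL\<close> is first lifted with the canonical witness numbering each box by the modal depth
  of its scope; all \<open>GL\<close>-axioms then become \<open>GL\<^sub>h\<close>-axioms. The heart of the matter is that any
  two \<open>L\<^sub>\<infinity>\<close>-formulas with the same forgetful image are \<open>GL\<^sub>h\<close>-equivalent: \<open>H\<close> raises the
  index of a box, and \<open>L\<^sub>h\<close> lowers it, because \<open>\<box>\<^sub>n\<^sub>+\<^sub>1 Y\<close> yields \<open>\<box>\<^sub>n\<^sub>+\<^sub>1(\<box>\<^sub>n Y \<rightarrow> Y)\<close>. Hence
  the lift may be re-indexed by an arbitrary witness.\<close>

lemma GL_imps_mp: "foldr MImp Ps R \<in> GL \<Longrightarrow> set Ps \<subseteq> GL \<Longrightarrow> R \<in> GL"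
  by (induction Ps) (auto intro: GL.MP)

lemma GL_tautological_consequence:
  "set Ps \<subseteq> GL \<Longrightarrow> mtaut (foldr MImp Ps R) \<Longrightarrow> R \<in> GL"
  using GL_imps_mp GL.taut by blast

lemma GL_imp_trans: "MImp X Y \<in> GL \<Longrightarrow> MImp Y Z \<in> GL \<Longrightarrow> MImp X Z \<in> GL"
  by (rule GL_tautological_consequence[of "[MImp X Y, MImp Y Z]"]) (auto simp: mtaut_def)

lemma GL_box_mono: "MImp X Y \<in> GL \<Longrightarrow> MImp (MBox X) (MBox Y) \<in> GL"
  using GL.Nec GL.K GL.MP by blast

text \<open>The standard derivation of \<open>4\<close> in \<open>GL\<close>: apply Loeb to \<open>\<box>A \<and> A\<close>.\<close>
lemma GL_box_imp_box_box: "MImp (MBox A) (MBox (MBox A)) \<in> GL"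
proof -
  define B where "B = MAnd (MBox A) A"
  have box_B: "MImp (MBox B) (MBox A) \<in> GL"
    by (rule GL_box_mono, rule GL.taut) (simp add: mtaut_def B_def)
  have "MImp A (MImp (MBox B) B) \<in> GL"
    by (rule GL_tautological_consequence[of "[MImp (MBox B) (MBox A)]"])
      (use box_B in \<open>auto simp: mtaut_def B_def\<close>)
  then have "MImp (MBox A) (MBox (MImp (MBox B) B)) \<in> GL"
    by (rule GL_box_mono)
  then have "MImp (MBox A) (MBox B) \<in> GL"
    using GL.L by (rule GL_imp_trans)
  moreover have "MImp (MBox B) (MBox (MBox A)) \<in> GL"
    by (rule GL_box_mono, rule GL.taut) (simp add: mtaut_def B_def)
  ultimately show ?thesis
    by (rule GL_imp_trans)
qed

lemma heval_forget: "heval va (\<lambda>n B. vb (forget B)) A = meval va vb (forget A)"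
  by (induction A) auto

lemma forget_GLh: "X \<in> GLh \<Longrightarrow> forget X \<in> GL"
proof (induction rule: GLh.induct)
  case (taut A)
  then show ?case
    by (intro GL.taut) (simp add: mtaut_def htaut_def flip: heval_forget)
next
  case (H n A)
  then show ?case by (intro GL.taut) (simp add: mtaut_def)
next
  case (Four n A)
  then show ?case using GL_box_imp_box_box by simp
qed (auto intro: GL.K GL.L GL.MP GL.Nec)

lemma forget_hconj: "forget (hconj Ds) = mconj (map forget Ds)"
  by (induction Ds) auto

lemma mderiv_forget_if_hderiv: "hderiv \<Gamma> A \<Longrightarrow> mderiv (forget ` \<Gamma>) (forget A)"
proof -
  assume "hderiv \<Gamma> A"
  then obtain Ds where "set Ds \<subseteq> \<Gamma>" and "HImp (hconj Ds) A \<in> GLh"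
    unfolding hderiv_def by blast
  then have "set (map forget Ds) \<subseteq> forget ` \<Gamma>"
    and "MImp (mconj (map forget Ds)) (forget A) \<in> GL"
    using forget_GLh by (force simp: forget_hconj)+
  then show ?thesis
    unfolding mderiv_def by blast
qed

lemma in_Linf_if_GLh: "X \<in> GLh \<Longrightarrow> in_Linf X"
  by (induction rule: GLh.induct) auto

lemma GLh_imps_mp: "foldr HImp Ps R \<in> GLh \<Longrightarrow> set Ps \<subseteq> GLh \<Longrightarrow> R \<in> GLh"
  by (induction Ps) (auto intro: GLh.MP)

lemma GLh_tautological_consequence:
  assumes "set Ps \<subseteq> GLh" and "in_Linf R" and "htaut (foldr HImp Ps R)"
  shows "R \<in> GLh"
proof -
  have "in_Linf (foldr HImp Ps R)"
    using assms(1,2) by (induction Ps) (auto dest: in_Linf_if_GLh)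
  then show ?thesis
    using assms GLh.taut GLh_imps_mp by blast
qed

lemma GLh_imp_refl: "in_Linf X \<Longrightarrow> HImp X X \<in> GLh"
  by (rule GLh.taut) (auto simp: htaut_def)

lemma GLh_imp_trans: "HImp X Y \<in> GLh \<Longrightarrow> HImp Y Z \<in> GLh \<Longrightarrow> HImp X Z \<in> GLh"
  by (rule GLh_tautological_consequence[of "[HImp X Y, HImp Y Z]"])
    (auto dest: in_Linf_if_GLh simp: htaut_def)

lemma GLh_box_Suc_imp_box:
  assumes "in_Linf (HBox n Y)"
  shows "HImp (HBox (Suc n) Y) (HBox n Y) \<in> GLh"
proof -
  have Y: "in_Linf Y" "\<forall>m\<in>boxes Y. m < n"
    using assms by auto
  have "HImp Y (HImp (HBox n Y) Y) \<in> GLh"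
    by (rule GLh.taut) (use Y in \<open>auto simp: htaut_def\<close>)
  then have "HBox (Suc n) (HImp Y (HImp (HBox n Y) Y)) \<in> GLh"
    by (rule GLh.Nec) (use Y in auto)
  moreover have "HImp (HBox (Suc n) (HImp Y (HImp (HBox n Y) Y)))
      (HImp (HBox (Suc n) Y) (HBox (Suc n) (HImp (HBox n Y) Y))) \<in> GLh"
    by (rule GLh.K) (use Y in auto)
  ultimately have "HImp (HBox (Suc n) Y) (HBox (Suc n) (HImp (HBox n Y) Y)) \<in> GLh"
    by (rule GLh.MP)
  moreover have "HImp (HBox (Suc n) (HImp (HBox n Y) Y)) (HBox n Y) \<in> GLh"
    by (rule GLh.L) (use Y in auto)
  ultimately show ?thesis
    by (rule GLh_imp_trans)
qed

lemma GLh_box_index_equiv: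
  assumes "in_Linf (HBox n A)" and "n \<le> m"
  shows "HImp (HBox n A) (HBox m A) \<in> GLh \<and> HImp (HBox m A) (HBox n A) \<in> GLh"
  using assms(2)
proof (induction m rule: dec_induct)
  case base
  show ?case using GLh_imp_refl[OF assms(1)] by simp
next
  case (step k)
  have "HImp (HBox k A) (HBox (Suc k) A) \<in> GLh"
    by (rule GLh.H) (use assms(1) step.hyps in auto)
  moreover have "HImp (HBox (Suc k) A) (HBox k A) \<in> GLh"
    by (rule GLh_box_Suc_imp_box) (use assms(1) step.hyps in auto)
  ultimately show ?case
    using step.IH GLh_imp_trans by blast
qed

lemma GLh_box_cong:
  assumes X: "in_Linf (HBox n X)" and Y: "in_Linf (HBox m Y)" and XY: "HImp X Y \<in> GLh"
  shows "HImp (HBox n X) (HBox m Y) \<in> GLh"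
proof -
  define k where "k = max n m"
  have "HBox k (HImp X Y) \<in> GLh"
    by (rule GLh.Nec[OF XY]) (use X Y in \<open>auto simp: k_def\<close>)
  moreover have "HImp (HBox k (HImp X Y)) (HImp (HBox k X) (HBox k Y)) \<in> GLh"
    by (rule GLh.K) (use X Y in \<open>auto simp: k_def\<close>)
  ultimately have "HImp (HBox k X) (HBox k Y) \<in> GLh"
    by (rule GLh.MP)
  moreover have "HImp (HBox n X) (HBox k X) \<in> GLh" "HImp (HBox k Y) (HBox m Y) \<in> GLh"
    using GLh_box_index_equiv[OF X] GLh_box_index_equiv[OF Y] by (simp_all add: k_def)
  ultimately show ?thesis
    using GLh_imp_trans by blast
qed

lemma GLh_equiv_if_forget_eq:
  "in_Linf X \<Longrightarrow> in_Linf Y \<Longrightarrow> forget X = forget Y \<Longrightarrow>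
   HImp X Y \<in> GLh \<and> HImp Y X \<in> GLh"
proof (induction X arbitrary: Y)
  case (HNeg X1)
  then obtain Y1 where Y: "Y = HNeg Y1" by (cases Y) auto
  let ?Ps = "[HImp X1 Y1, HImp Y1 X1]"
  from HNeg Y have "set ?Ps \<subseteq> GLh" by auto
  with HNeg Y show ?case
    by (intro conjI GLh_tautological_consequence[OF \<open>set ?Ps \<subseteq> GLh\<close>]) (auto simp: htaut_def)
next
  case (HAnd X1 X2)
  then obtain Y1 Y2 where Y: "Y = HAnd Y1 Y2" by (cases Y) auto
  let ?Ps = "[HImp X1 Y1, HImp Y1 X1, HImp X2 Y2, HImp Y2 X2]"
  from HAnd Y have "set ?Ps \<subseteq> GLh" by auto
  with HAnd Y show ?case
    by (intro conjI GLh_tautological_consequence[OF \<open>set ?Ps \<subseteq> GLh\<close>]) (auto simp: htaut_def)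
next
  case (HOr X1 X2)
  then obtain Y1 Y2 where Y: "Y = HOr Y1 Y2" by (cases Y) auto
  let ?Ps = "[HImp X1 Y1, HImp Y1 X1, HImp X2 Y2, HImp Y2 X2]"
  from HOr Y have "set ?Ps \<subseteq> GLh" by auto
  with HOr Y show ?case
    by (intro conjI GLh_tautological_consequence[OF \<open>set ?Ps \<subseteq> GLh\<close>]) (auto simp: htaut_def)
next
  case (HImp X1 X2)
  then obtain Y1 Y2 where Y: "Y = HImp Y1 Y2" by (cases Y) auto
  let ?Ps = "[HImp X1 Y1, HImp Y1 X1, HImp X2 Y2, HImp Y2 X2]"
  from HImp Y have "set ?Ps \<subseteq> GLh" by auto
  with HImp Y show ?case
    by (intro conjI GLh_tautological_consequence[OF \<open>set ?Ps \<subseteq> GLh\<close>]) (auto simp: htaut_def)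
next
  case (HBox n X1)
  then obtain m Y1 where Y: "Y = HBox m Y1" by (cases Y) auto
  with HBox have "HImp X1 Y1 \<in> GLh" "HImp Y1 X1 \<in> GLh" by auto
  with HBox.prems Y show ?case by (auto intro: GLh_box_cong)
qed (case_tac Y; auto intro: GLh_imp_refl)+

lemma GLh_transfer: "X \<in> GLh \<Longrightarrow> in_Linf Y \<Longrightarrow> forget X = forget Y \<Longrightarrow> Y \<in> GLh"
  using GLh_equiv_if_forget_eq in_Linf_if_GLh GLh.MP by blast

fun modal_depth :: "'a mfm \<Rightarrow> nat" where
  "modal_depth (MAtom p) = 0"
| "modal_depth MBot = 0"
| "modal_depth MTop = 0"
| "modal_depth (MNeg A) = modal_depth A"
| "modal_depth (MAnd A B) = max (modal_depth A) (modal_depth B)"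
| "modal_depth (MOr A B) = max (modal_depth A) (modal_depth B)"
| "modal_depth (MImp A B) = max (modal_depth A) (modal_depth B)"
| "modal_depth (MBox A) = Suc (modal_depth A)"

fun canonical_lift :: "'a mfm \<Rightarrow> 'a hfm" where
  "canonical_lift (MAtom p) = HAtom p"
| "canonical_lift MBot = HBot"
| "canonical_lift MTop = HTop"
| "canonical_lift (MNeg A) = HNeg (canonical_lift A)"
| "canonical_lift (MAnd A B) = HAnd (canonical_lift A) (canonical_lift B)"
| "canonical_lift (MOr A B) = HOr (canonical_lift A) (canonical_lift B)"
| "canonical_lift (MImp A B) = HImp (canonical_lift A) (canonical_lift B)"
| "canonical_lift (MBox A) = HBox (modal_depth A) (canonical_lift A)"

lemma in_Linf_canonical_lift:
  "in_Linf (canonical_lift A) \<and> (\<forall>m\<in>boxes (canonical_lift A). m < modal_depth A)"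
  by (induction A) (auto simp: less_max_iff_disj)

lemma forget_canonical_lift: "forget (canonical_lift A) = A"
  by (induction A) auto

lemma forget_inst: "forget (inst w A) = A"
  by (induction A arbitrary: w) auto

lemma heval_canonical_lift:
  "heval va vb (canonical_lift A) = meval va (\<lambda>B. vb (modal_depth B) (canonical_lift B)) A"
  by (induction A) auto

lemma canonical_lift_GL: "A \<in> GL \<Longrightarrow> canonical_lift A \<in> GLh"
proof (induction rule: GL.induct)
  case (taut A)
  then show ?case
    by (intro GLh.taut)
      (auto simp: htaut_def mtaut_def heval_canonical_lift in_Linf_canonical_lift)
next
  case (K A B)
  define n where "n = Suc (max (modal_depth A) (modal_depth B))"
  have "HImp (HBox n (HImp (canonical_lift A) (canonical_lift B)))
      (HImp (HBox n (canonical_lift A)) (HBox n (canonical_lift B))) \<in> GLh"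
    by (rule GLh.K)
      (use in_Linf_canonical_lift[of A] in_Linf_canonical_lift[of B] in \<open>auto simp: n_def\<close>)
  then show ?case
    by (rule GLh_transfer)
      (auto simp: forget_canonical_lift in_Linf_canonical_lift simp del: canonical_lift.simps)
next
  case (L A)
  define n where "n = Suc (modal_depth A)"
  have "HImp (HBox (Suc n) (HImp (HBox n (canonical_lift A)) (canonical_lift A)))
      (HBox n (canonical_lift A)) \<in> GLh"
    by (rule GLh.L) (use in_Linf_canonical_lift[of A] in \<open>auto simp: n_def\<close>)
  then show ?case
    by (rule GLh_transfer)
      (auto simp: forget_canonical_lift in_Linf_canonical_lift simp del: canonical_lift.simps)
next
  case (MP A B)
  then show ?case using GLh.MP by simp
next
  case (Nec A)
  then show ?case
    using GLh.Nec[of "canonical_lift A" "modal_depth A"] in_Linf_canonical_lift[of A] by simp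
qed

lemma in_Linf_hconj: "\<forall>B\<in>set Ds. in_Linf B \<Longrightarrow> in_Linf (hconj Ds)"
  by (induction Ds) auto

lemma hderiv_inst_if_mderiv:
  assumes "\<forall>B\<in>\<Gamma>. is_witness (v B) B" and "is_witness w A" and "mderiv \<Gamma> A"
  shows "hderiv ((\<lambda>B. inst (v B) B) ` \<Gamma>) (inst w A)"
proof -
  obtain Ds where Ds: "set Ds \<subseteq> \<Gamma>" "MImp (mconj Ds) A \<in> GL"
    using assms(3) unfolding mderiv_def by blast
  define Es where "Es = map (\<lambda>B. inst (v B) B) Ds"
  have "in_Linf (HImp (hconj Es) (inst w A))"
    using assms(1,2) Ds(1) by (auto intro!: in_Linf_hconj simp: Es_def is_witness_def subset_iff)
  moreover have "forget (canonical_lift (MImp (mconj Ds) A)) = forget (HImp (hconj Es) (inst w A))"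
    by (simp add: forget_canonical_lift forget_hconj Es_def forget_inst o_def)
  ultimately have "HImp (hconj Es) (inst w A) \<in> GLh"
    using GLh_transfer canonical_lift_GL[OF Ds(2)] by blast
  moreover have "set Es \<subseteq> (\<lambda>B. inst (v B) B) ` \<Gamma>"
    using Ds(1) unfolding Es_def by auto
  ultimately show ?thesis
    unfolding hderiv_def by blast
qed

theorem theorem3p13:
  shows "(\<forall>(\<Gamma> :: 'a hfm set) A. (\<forall>B\<in>\<Gamma>. in_Linf B) \<longrightarrow> in_Linf A \<longrightarrow>
            hderiv \<Gamma> A \<longrightarrow> mderiv (forget ` \<Gamma>) (forget A))
       \<and> (\<forall>(\<Gamma> :: 'a mfm set) A v w. (\<forall>B\<in>\<Gamma>. is_witness (v B) B) \<longrightarrow> is_witness w A \<longrightarrow>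
            mderiv \<Gamma> A \<longrightarrow> hderiv ((\<lambda>B. inst (v B) B) ` \<Gamma>) (inst w A))"
  using mderiv_forget_if_hderiv hderiv_inst_if_mderiv by blast

end
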